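(* Let $P$ be a term and $p,q$ interactions valid for $P$ such that $q$ is a permutation of $p$. Then $p\sim q$.
   Context: Fix a commutative semiring $\mathbb K$ and a countable set $\mathcal N$ of names. Polarities are $+,-$; $\neg$ exchanges them. An action is $u^\varepsilon(x)$ with $u,x\in\mathcal N$, $\varepsilon$ a polarity ($u$ is its subject; $x$ is bound in the continuation). Terms: $P,Q::=k\mid \alpha.P\mid \diamond P\mid P|Q\mid P\parallel Q\mid \nu x\,P$ with $k\in\mathbb K$. Terms are taken up to injective renaming of bound names and $\nu x\nu y P=\nu y\nu x P$, bound names being distinct from all other names. Positions are finite sequences of integers, $\iota.\kappa$ is concatenation, $\epsilon$ the empty position, ordered by the prefix order; two positions are independent if incomparable. Transition labels are visible labels $u^\varepsilon(x):\iota$ or internal labels $(\iota,\kappa)$; $\iota.a$ denotes $a$ with every position $\kappa$ replaced by $\iota.\kappa$. Transitions are generated by: $\alpha.P\xrightarrow{\alpha:\epsilon}\diamond P$; if $P\xrightarrow{a}P'$ then $\diamond P\xrightarrow{1.a}\diamond P'$, $P|Q\xrightarrow{1.a}P'|Q$, $Q|P\xrightarrow{2.a}Q|P'$, $P\parallel Q\xrightarrow{1.a}P'\parallel Q$, $Q\parallel P\xrightarrow{2.a}Q\parallel P'$, and $\nu x P\xrightarrow{a}\nu xP'$ if $x$ does not occur in $a$; if $P\xrightarrow{u^\varepsilon(x):\iota}P'$ and $Q\xrightarrow{u^{\neg\varepsilon}(y):\kappa}Q'$ then $P|Q\xrightarrow{(1.\iota,2.\kappa)}\nu x(P'|Q'[x/y])$.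 An interaction is a finite sequence of transition labels; it is valid for (an interaction of) $P$ if there are consecutive transitions from $P$ with these labels. Two labels are independent if every position occurring in one is independent of every position occurring in the other. Homotopy $\sim$ is the smallest congruence (for concatenation) on sequences of labels such that $ab\sim ba$ whenever $a,b$ are independent. *)

theory Defs
  imports Main "HOL-Library.Multiset" "HOL-Library.Sublist"
begin

text \<open>Names: a countable set, rendered as nat.  Positions: finite sequences of integers.\<close>
type_synonym name = nat
type_synonym position = "int list"

datatype polarity = Pos | Neg

fun neg_pol :: "polarity \<Rightarrow> polarity" where
  "neg_pol Pos = Neg" | "neg_pol Neg = Pos"

text \<open>Action u^eps(x): subject u, polarity eps, bound name x.\<close>
datatype action = Act (subj: name) polarity (bnd: name)

text \<open>Terms over the commutative semiring 'k.\<close>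
datatype 'k proc =
    Const 'k
  | Pre action "'k proc"
  | Dia "'k proc"                 (* diamond P *)
  | Par "'k proc" "'k proc"
  | Ind "'k proc" "'k proc"       (* P || Q *)
  | Nu name "'k proc"

fun names :: "'k proc \<Rightarrow> name set" where
  "names (Const k) = {}"
| "names (Pre (Act u e x) P) = {u, x} \<union> names P"
| "names (Dia P) = names P"
| "names (Par P Q) = names P \<union> names Q"
| "names (Ind P Q) = names P \<union> names Q"
| "names (Nu x P) = {x} \<union> names P"

text \<open>subst y x P = P[x/y]: replace free occurrences of y by x (used only where x
  does not occur in P, so no capture arises).\<close>
fun subst :: "name \<Rightarrow> name \<Rightarrow> 'k proc \<Rightarrow> 'k proc" where
  "subst y x (Const k) = Const k"
| "subst y x (Pre (Act u e z) P) =
     Pre (Act (if u = y then x else u) e z) (if z = y then P else subst y x P)"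
| "subst y x (Dia P) = Dia (subst y x P)"
| "subst y x (Par P Q) = Par (subst y x P) (subst y x Q)"
| "subst y x (Ind P Q) = Ind (subst y x P) (subst y x Q)"
| "subst y x (Nu z P) = Nu z (if z = y then P else subst y x P)"

inductive aeq :: "'k proc \<Rightarrow> 'k proc \<Rightarrow> bool" where
  aeq_refl: "aeq P P"
| aeq_sym: "aeq P Q \<Longrightarrow> aeq Q P"
| aeq_trans: "aeq P Q \<Longrightarrow> aeq Q R \<Longrightarrow> aeq P R"
| aeq_alpha_nu: "y \<notin> names P \<Longrightarrow> aeq (Nu x P) (Nu y (subst x y P))"
| aeq_alpha_pre: "y \<notin> names P \<Longrightarrow> aeq (Pre (Act u e x) P) (Pre (Act u e y) (subst x y P))"
| aeq_nu_swap: "aeq (Nu x (Nu y P)) (Nu y (Nu x P))"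
| aeq_pre: "aeq P P' \<Longrightarrow> aeq (Pre a P) (Pre a P')"
| aeq_dia: "aeq P P' \<Longrightarrow> aeq (Dia P) (Dia P')"
| aeq_par: "aeq P P' \<Longrightarrow> aeq Q Q' \<Longrightarrow> aeq (Par P Q) (Par P' Q')"
| aeq_ind: "aeq P P' \<Longrightarrow> aeq Q Q' \<Longrightarrow> aeq (Ind P Q) (Ind P' Q')"
| aeq_nu: "aeq P P' \<Longrightarrow> aeq (Nu x P) (Nu x P')"

text \<open>Transition labels: visible u^eps(x):iota, internal (iota,kappa).\<close>
datatype label = Vis action position | Intl position position

fun lab_prefix :: "position \<Rightarrow> label \<Rightarrow> label" where
  "lab_prefix i (Vis a k) = Vis a (i @ k)"
| "lab_prefix i (Intl k l) = Intl (i @ k) (i @ l)"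

fun lab_names :: "label \<Rightarrow> name set" where
  "lab_names (Vis (Act u e x) k) = {u, x}"
| "lab_names (Intl k l) = {}"

fun lab_positions :: "label \<Rightarrow> position set" where
  "lab_positions (Vis a k) = {k}"
| "lab_positions (Intl k l) = {k, l}"

inductive step :: "'k proc \<Rightarrow> label \<Rightarrow> 'k proc \<Rightarrow> bool" where
  st_act: "step (Pre a P) (Vis a []) (Dia P)"
| st_dia: "step P a P' \<Longrightarrow> step (Dia P) (lab_prefix [1] a) (Dia P')"
| st_par1: "step P a P' \<Longrightarrow> step (Par P Q) (lab_prefix [1] a) (Par P' Q)"
| st_par2: "step P a P' \<Longrightarrow> step (Par Q P) (lab_prefix [2] a) (Par Q P')"
| st_ind1: "step P a P' \<Longrightarrow> step (Ind P Q) (lab_prefix [1] a) (Ind P' Q)"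
| st_ind2: "step P a P' \<Longrightarrow> step (Ind Q P) (lab_prefix [2] a) (Ind Q P')"
| st_nu: "step P a P' \<Longrightarrow> x \<notin> lab_names a \<Longrightarrow> step (Nu x P) a (Nu x P')"
| st_comm: "step P (Vis (Act u e x) i) P' \<Longrightarrow> step Q (Vis (Act u (neg_pol e) y) k) Q' \<Longrightarrow>
            x \<notin> names Q' \<Longrightarrow>
            step (Par P Q) (Intl ([1] @ i) ([2] @ k)) (Nu x (Par P' (subst y x Q')))"

fun valid :: "'k proc \<Rightarrow> label list \<Rightarrow> bool" where
  "valid P [] = True"
| "valid P (a # p) = (\<exists>P0 P1. aeq P P0 \<and> step P0 a P1 \<and> valid P1 p)"

definition indep_pos :: "position \<Rightarrow> position \<Rightarrow> bool" where
  "indep_pos i k \<longleftrightarrow> \<not> prefix i k \<and> \<not> prefix k i"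

definition indep_lab :: "label \<Rightarrow> label \<Rightarrow> bool" where
  "indep_lab a b \<longleftrightarrow> (\<forall>i\<in>lab_positions a. \<forall>k\<in>lab_positions b. indep_pos i k)"

inductive homotopic :: "label list \<Rightarrow> label list \<Rightarrow> bool" where
  hom_refl: "homotopic p p"
| hom_sym: "homotopic p q \<Longrightarrow> homotopic q p"
| hom_trans: "homotopic p q \<Longrightarrow> homotopic q r \<Longrightarrow> homotopic p r"
| hom_swap: "indep_lab a b \<Longrightarrow> homotopic (u @ [a, b] @ v) (u @ [b, a] @ v)"

end

theory Submission
  imports Defs
begin

text \<open>A transition of P fires prefixes sitting at positions of P, and every prefix
  still available afterwards sits strictly below or beside the fired ones, never above.
  Hence along a valid interaction no later label has a position that is a prefix of a
  position of an earlier label. If q is a permutation of p, two labels that occur in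
  opposite orders in p and q therefore have pairwise incomparable positions, i.e.
  they are independent, and q is obtained from p by swapping such neighbours.\<close>

fun action_positions :: "'k proc \<Rightarrow> position set" where
  "action_positions (Const k) = {}"
| "action_positions (Pre a P) = insert [] ((#) 1 ` action_positions P)"
| "action_positions (Dia P) = (#) 1 ` action_positions P"
| "action_positions (Par P Q) = (#) 1 ` action_positions P \<union> (#) 2 ` action_positions Q"
| "action_positions (Ind P Q) = (#) 1 ` action_positions P \<union> (#) 2 ` action_positions Q"
| "action_positions (Nu x P) = action_positions P"

lemma action_positions_subst [simp]: "action_positions (subst y x P) = action_positions P"
  by (induction y x P rule: subst.induct) auto

lemma action_positions_aeq: "aeq P Q \<Longrightarrow> action_positions P = action_positions Q"
  by (induction rule: aeq.induct) auto

lemma lab_positions_lab_prefix [simp]: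
  "lab_positions (lab_prefix i a) = (@) i ` lab_positions a"
  by (cases a) auto

lemma step_action_positions:
  assumes "step P a P'"
  shows "lab_positions a \<subseteq> action_positions P
    \<and> action_positions P' \<subseteq> action_positions P
    \<and> (\<forall>\<iota>\<in>action_positions P'. \<forall>\<kappa>\<in>lab_positions a. \<not> prefix \<iota> \<kappa>)"
  using assms by (induction rule: step.induct) (auto simp: image_iff)

definition may_follow :: "label \<Rightarrow> label \<Rightarrow> bool" where
  "may_follow a b \<longleftrightarrow> (\<forall>\<iota>\<in>lab_positions a. \<forall>\<kappa>\<in>lab_positions b. \<not> prefix \<kappa> \<iota>)"

lemma indep_lab_iff_may_follow: "indep_lab a b \<longleftrightarrow> may_follow a b \<and> may_follow b a"
  unfolding indep_lab_def indep_pos_def may_follow_def by blast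

lemma valid_action_positions_sorted:
  "valid P p \<Longrightarrow>
     (\<forall>b\<in>set p. lab_positions b \<subseteq> action_positions P) \<and> sorted_wrt may_follow p"
proof (induction p arbitrary: P)
  case Nil
  then show ?case by simp
next
  case (Cons a p)
  then obtain P0 P1 where "aeq P P0" "step P0 a P1" "valid P1 p" by auto
  moreover from this have "action_positions P = action_positions P0"
    by (simp add: action_positions_aeq)
  ultimately show ?case
    using step_action_positions Cons.IH unfolding may_follow_def by fastforce
qed

lemma valid_sorted_may_follow: "valid P p \<Longrightarrow> sorted_wrt may_follow p"
  using valid_action_positions_sorted by blast

lemma homotopic_Cons: "homotopic r s \<Longrightarrow> homotopic (a # r) (a # s)"
proof (induction rule: homotopic.induct)
  case (hom_swap x y u v)
  then show ?case using homotopic.hom_swap[of x y "a # u" v] by simp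
qed (auto intro: homotopic.intros)

lemma homotopic_move_front:
  assumes "\<forall>b\<in>set q. indep_lab a b"
  shows "homotopic (u @ q @ a # v) (u @ a # q @ v)"
  using assms
proof (induction q arbitrary: u)
  case Nil
  then show ?case by (simp add: hom_refl)
next
  case (Cons b q)
  have "homotopic ((u @ [b]) @ q @ a # v) ((u @ [b]) @ a # q @ v)"
    using Cons.IH[of "u @ [b]"] Cons.prems by simp
  moreover have "homotopic (u @ [b, a] @ q @ v) (u @ [a, b] @ q @ v)"
    using Cons.prems indep_lab_iff_may_follow by (intro hom_swap) auto
  ultimately show ?case using hom_trans by fastforce
qed

lemma sorted_may_follow_perm_homotopic:
  "sorted_wrt may_follow p \<Longrightarrow> sorted_wrt may_follow q \<Longrightarrow> mset q = mset p
    \<Longrightarrow> homotopic p q"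
proof (induction p arbitrary: q)
  case Nil
  then show ?case by (simp add: hom_refl)
next
  case (Cons a r)
  have "a \<in> set q" using Cons.prems(3) by (metis list.set_intros(1) set_mset_mset)
  then obtain q1 q2 where q: "q = q1 @ a # q2" "a \<notin> set q1"
    using split_list_first by metis
  have mset_r: "mset (q1 @ q2) = mset r" using Cons.prems(3) q by simp
  have indep: "\<forall>b\<in>set q1. indep_lab a b"
  proof
    fix b assume b: "b \<in> set q1"
    then have "b \<in> set r" using mset_r by (metis Un_iff set_append set_mset_mset)
    then have "may_follow a b" using Cons.prems(1) by simp
    moreover have "may_follow b a" using Cons.prems(2) q b by (simp add: sorted_wrt_append)
    ultimately show "indep_lab a b" by (simp add: indep_lab_iff_may_follow)
  qed
  have "sorted_wrt may_follow (q1 @ q2)" using Cons.prems(2) q by (simp add: sorted_wrt_append)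
  then have "homotopic r (q1 @ q2)" using Cons.IH Cons.prems(1) mset_r by simp
  then have "homotopic (a # r) (a # q1 @ q2)" by (rule homotopic_Cons)
  moreover have "homotopic (a # q1 @ q2) q"
    using hom_sym[OF homotopic_move_front[OF indep, of "[]" q2]] q by simp
  ultimately show ?case by (rule hom_trans)
qed

theorem proposition2p7:
  fixes P :: "'k::comm_semiring_1 proc" and p q :: "label list"
  assumes "valid P p" and "valid P q" and "mset q = mset p"
  shows "homotopic p q"
  using assms by (blast intro: sorted_may_follow_perm_homotopic valid_sorted_may_follow)

end
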